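(* Let $\mathcal C$ be a nondegenerate conic section in the (complex or real) projective plane, equipped with a rational parametrization, i.e. a birational bijection $\mathbb{P}^1\to\mathcal C$; for a point of $\mathcal C$ denoted by a capital letter, the corresponding lowercase letter denotes its parameter value. (1) Let the broken lines $X_1X_2X_3X_4$ and $Y_1Y_2Y_3Y_4$ be inscribed in $\mathcal C$. Then the intersection points $A_j=X_jX_{j+1}\cap Y_jY_{j+1}$, $j=1,2,3$, are collinear if and only if \[ (x_1,y_2,x_3,y_4)=(y_1,x_2,y_3,x_4). \] (2) Let the broken lines $Y_2Y_1UX_1X_2$ and $PVQ$ be inscribed in $\mathcal C$. Then the points \[ A=X_1X_2\cap Y_1Y_2,\quad B=UX_1\cap PV,\quad C=UY_1\cap QV \] are collinear if and only if \[ (p,u,q,x_2,y_1,v,x_1,y_2)=1. \]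
   Context: The cross-ratio is $(a,b,c,d)=\frac{a-b}{b-c}\cdot\frac{c-d}{d-a}$. More generally, the multi-ratio of an even number of arguments is $(a_1,a_2,\dots,a_{2k})=\prod_{i=1}^{k}\frac{a_{2i-1}-a_{2i}}{a_{2i}-a_{2i+1}}$ with $a_{2k+1}=a_1$, i.e. $(a,b,\dots,c,d)=\frac{a-b}{b-\cdots}\cdots\frac{c-d}{d-a}$. $PQ$ denotes the line through $P$ and $Q$; the points are assumed to be in general position so that all lines and intersections are defined. *)

theory Defs
  imports Main
begin

text \<open>Points of the projective plane over a field are represented by homogeneous
coordinate triples; a triple different from (0,0,0) represents a point, and proportional
triples represent the same point.\<close>

type_synonym 'a hpt = "'a \<times> 'a \<times> 'a"

fun det3 :: "'a::comm_ring_1 hpt \<Rightarrow> 'a hpt \<Rightarrow> 'a hpt \<Rightarrow> 'a" where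
  "det3 (a1, a2, a3) (b1, b2, b3) (c1, c2, c3) =
     a1 * (b2 * c3 - b3 * c2) - a2 * (b1 * c3 - b3 * c1) + a3 * (b1 * c2 - b2 * c1)"

definition proj_collinear :: "'a::comm_ring_1 hpt \<Rightarrow> 'a hpt \<Rightarrow> 'a hpt \<Rightarrow> bool" where
  "proj_collinear P Q R \<longleftrightarrow> det3 P Q R = 0"

definition is_meet :: "'a::comm_ring_1 hpt \<Rightarrow> 'a hpt \<Rightarrow> 'a hpt \<Rightarrow> 'a hpt \<Rightarrow> 'a hpt \<Rightarrow> bool" where
  "is_meet A P Q R S \<longleftrightarrow> A \<noteq> (0, 0, 0) \<and> proj_collinear A P Q \<and> proj_collinear A R S"

text \<open>The map t \<mapsto> c0 + t c1 + t^2 c2 (affine chart of the parameter line).\<close>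
fun conic_pt :: "'a::comm_ring_1 hpt \<Rightarrow> 'a hpt \<Rightarrow> 'a hpt \<Rightarrow> 'a \<Rightarrow> 'a hpt" where
  "conic_pt (a0, b0, d0) (a1, b1, d1) (a2, b2, d2) t =
     (a0 + a1 * t + a2 * t ^ 2, b0 + b1 * t + b2 * t ^ 2, d0 + d1 * t + d2 * t ^ 2)"

text \<open>phi is a rational (birational) parametrization of a nondegenerate conic:
its three coordinate polynomials have degree at most 2 and are linearly independent.\<close>
definition conic_param :: "('a::comm_ring_1 \<Rightarrow> 'a hpt) \<Rightarrow> bool" where
  "conic_param phi \<longleftrightarrow> (\<exists>c0 c1 c2. det3 c0 c1 c2 \<noteq> 0 \<and> phi = conic_pt c0 c1 c2)"

definition mratio :: "'a::field list \<Rightarrow> 'a" where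
  "mratio xs = (\<Prod>i<length xs div 2.
      (xs ! (2 * i) - xs ! (2 * i + 1)) / (xs ! (2 * i + 1) - xs ! ((2 * i + 2) mod length xs)))"

end

theory Submission
  imports Defs
begin

text \<open>Every parametrized conic is the image \<open>\<phi> = M \<circ> \<nu>\<close> of the moment curve
\<open>\<nu>(t) = (1, t, t\<^sup>2)\<close> under an invertible linear map \<open>M\<close>. The chord of the moment curve
through \<open>\<nu>(a)\<close> and \<open>\<nu>(b)\<close> is the line with coordinates \<open>(ab, -(a + b), 1)\<close>, and since
\<open>Mu \<times> Mv = cof(M)(u \<times> v)\<close>, the meet of the chords \<open>\<phi>(a)\<phi>(b)\<close> and \<open>\<phi>(c)\<phi>(d)\<close> is, up to a
nonzero factor, \<open>M\<close> applied to the cross product of the two chord coordinate vectors.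
As \<open>det(Mu, Mv, Mw) = det M \<cdot> det(u, v, w)\<close>, collinearity of three such meets is the
vanishing of a determinant of explicit polynomial vectors in the parameters; this
determinant factors into differences of distinct parameters times the numerator of
the stated multi-ratio identity.\<close>

fun cross3 :: "'a::comm_ring_1 hpt \<Rightarrow> 'a hpt \<Rightarrow> 'a hpt" where
  "cross3 (u0, u1, u2) (v0, v1, v2) = (u1 * v2 - u2 * v1, u2 * v0 - u0 * v2, u0 * v1 - u1 * v0)"

fun dot3 :: "'a::comm_ring_1 hpt \<Rightarrow> 'a hpt \<Rightarrow> 'a" where
  "dot3 (u0, u1, u2) (v0, v1, v2) = u0 * v0 + u1 * v1 + u2 * v2"

fun scale3 :: "'a::comm_ring_1 \<Rightarrow> 'a hpt \<Rightarrow> 'a hpt" where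
  "scale3 k (u0, u1, u2) = (k * u0, k * u1, k * u2)"

fun lincomb3 :: "'a::comm_ring_1 hpt \<Rightarrow> 'a hpt \<Rightarrow> 'a hpt \<Rightarrow> 'a hpt \<Rightarrow> 'a hpt" where
  "lincomb3 (a0, b0, d0) (a1, b1, d1) (a2, b2, d2) (u0, u1, u2) =
     (u0 * a0 + u1 * a1 + u2 * a2, u0 * b0 + u1 * b1 + u2 * b2, u0 * d0 + u1 * d1 + u2 * d2)"

text \<open>\<open>cof3 c0 c1 c2\<close> is the cofactor matrix of the matrix with columns \<open>c0, c1, c2\<close>.\<close>

definition cof3 :: "'a::comm_ring_1 hpt \<Rightarrow> 'a hpt \<Rightarrow> 'a hpt \<Rightarrow> 'a hpt \<Rightarrow> 'a hpt" where
  "cof3 c0 c1 c2 = lincomb3 (cross3 c1 c2) (cross3 c2 c0) (cross3 c0 c1)"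

definition chord_line :: "'a::comm_ring_1 \<Rightarrow> 'a \<Rightarrow> 'a hpt" where
  "chord_line a b = (a * b, - (a + b), 1)"

definition chords_meet :: "'a::comm_ring_1 \<Rightarrow> 'a \<Rightarrow> 'a \<Rightarrow> 'a \<Rightarrow> 'a hpt" where
  "chords_meet a b c d = cross3 (chord_line a b) (chord_line c d)"

lemma det3_eq_dot3_cross3: "det3 u v w = dot3 u (cross3 v w)"
  by (cases u; cases v; cases w) (simp add: algebra_simps)

lemma dot3_scale3: "dot3 u (scale3 k v) = k * dot3 u v"
  by (cases u; cases v) (simp add: algebra_simps)

lemma scale3_scale3: "scale3 a (scale3 b u) = scale3 (a * b) u"
  by (cases u) (simp add: algebra_simps)

lemma scale3_eq_zero_iff:
  fixes k :: "'a::idom"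
  shows "scale3 k u = (0, 0, 0) \<longleftrightarrow> k = 0 \<or> u = (0, 0, 0)"
  by (cases u) auto

lemma det3_scale3: "det3 (scale3 a u) (scale3 b v) (scale3 c w) = a * b * c * det3 u v w"
  by (cases u; cases v; cases w) (simp add: algebra_simps)

lemma conic_pt_eq_lincomb3: "conic_pt c0 c1 c2 t = lincomb3 c0 c1 c2 (1, t, t\<^sup>2)"
  by (cases c0; cases c1; cases c2) (simp add: algebra_simps)

lemma cross3_lincomb3:
  "cross3 (lincomb3 c0 c1 c2 u) (lincomb3 c0 c1 c2 v) = cof3 c0 c1 c2 (cross3 u v)"
  unfolding cof3_def
  by (cases c0; cases c1; cases c2; cases u; cases v) (simp add: algebra_simps)

lemma cross3_cof3:
  "cross3 (cof3 c0 c1 c2 u) (cof3 c0 c1 c2 v) = scale3 (det3 c0 c1 c2) (lincomb3 c0 c1 c2 (cross3 u v))"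
  unfolding cof3_def
  by (cases c0; cases c1; cases c2; cases u; cases v) (simp add: algebra_simps)

lemma cof3_scale3: "cof3 c0 c1 c2 (scale3 k u) = scale3 k (cof3 c0 c1 c2 u)"
  unfolding cof3_def by (cases c0; cases c1; cases c2; cases u) (simp add: algebra_simps)

lemma det3_lincomb3:
  "det3 (lincomb3 c0 c1 c2 u) (lincomb3 c0 c1 c2 v) (lincomb3 c0 c1 c2 w) = det3 c0 c1 c2 * det3 u v w"
  by (cases c0; cases c1; cases c2; cases u; cases v; cases w) (simp add: algebra_simps)

lemma lincomb3_eq_zero_iff:
  fixes c0 :: "'a::field hpt"
  assumes "det3 c0 c1 c2 \<noteq> 0"
  shows "lincomb3 c0 c1 c2 w = (0, 0, 0) \<longleftrightarrow> w = (0, 0, 0)"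
proof
  assume zero: "lincomb3 c0 c1 c2 w = (0, 0, 0)"
  obtain w0 w1 w2 where w: "w = (w0, w1, w2)" by (cases w)
  have "dot3 (cross3 c1 c2) (lincomb3 c0 c1 c2 w) = w0 * det3 c0 c1 c2"
       "dot3 (cross3 c2 c0) (lincomb3 c0 c1 c2 w) = w1 * det3 c0 c1 c2"
       "dot3 (cross3 c0 c1) (lincomb3 c0 c1 c2 w) = w2 * det3 c0 c1 c2"
    unfolding w by (cases c0; cases c1; cases c2; simp add: algebra_simps)+
  moreover have "dot3 x (0, 0, 0) = 0" for x :: "'a hpt"
    by (cases x) simp
  ultimately have "w0 * det3 c0 c1 c2 = 0" "w1 * det3 c0 c1 c2 = 0" "w2 * det3 c0 c1 c2 = 0"
    using zero by metis+
  with assms show "w = (0, 0, 0)"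
    unfolding w by simp
qed (cases c0; cases c1; cases c2; simp)

lemma cross3_cross3_eq_zero_if_orthogonal:
  assumes "dot3 u v = 0" "dot3 u w = 0"
  shows "cross3 u (cross3 v w) = (0, 0, 0)"
proof -
  obtain v0 v1 v2 w0 w1 w2 where v: "v = (v0, v1, v2)" and w: "w = (w0, w1, w2)"
    by (cases v; cases w)
  have "cross3 u (cross3 v w) =
      (v0 * dot3 u w - w0 * dot3 u v, v1 * dot3 u w - w1 * dot3 u v, v2 * dot3 u w - w2 * dot3 u v)"
    unfolding v w by (cases u) (simp add: algebra_simps)
  with assms show ?thesis by simp
qed

lemma cross3_eq_zero_imp_parallel:
  fixes u :: "'a::field hpt"
  assumes "cross3 u w = (0, 0, 0)" "w \<noteq> (0, 0, 0)"
  obtains k where "u = scale3 k w"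
proof -
  obtain u0 u1 u2 w0 w1 w2 where u: "u = (u0, u1, u2)" and w: "w = (w0, w1, w2)"
    by (cases u; cases w)
  have eqs: "u1 * w2 = u2 * w1" "u2 * w0 = u0 * w2" "u0 * w1 = u1 * w0"
    using assms(1) unfolding u w by auto
  consider "w0 \<noteq> 0" | "w1 \<noteq> 0" | "w2 \<noteq> 0"
    using assms(2) w by auto
  then show thesis
  proof cases
    case 1
    with eqs show thesis by (intro that[of "u0 / w0"]) (auto simp: u w field_simps)
  next
    case 2
    with eqs show thesis by (intro that[of "u1 / w1"]) (auto simp: u w field_simps)
  next
    case 3
    with eqs show thesis by (intro that[of "u2 / w2"]) (auto simp: u w field_simps)
  qed
qed

lemma cross3_moment_curve: "cross3 (1, a, a\<^sup>2) (1, b, b\<^sup>2) = scale3 (b - a) (chord_line a b)"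
  unfolding chord_line_def by (simp add: algebra_simps power2_eq_square)

lemma cross3_conic_pt:
  "cross3 (conic_pt c0 c1 c2 a) (conic_pt c0 c1 c2 b) = scale3 (b - a) (cof3 c0 c1 c2 (chord_line a b))"
  unfolding conic_pt_eq_lincomb3 cross3_lincomb3 cross3_moment_curve cof3_scale3 ..

lemma chords_meet_eq:
  "chords_meet a b c d = (c + d - a - b, c * d - a * b, (a + b) * (c * d) - a * b * (c + d))"
  unfolding chords_meet_def chord_line_def by (simp add: algebra_simps)

lemma chords_meet_nonzero:
  fixes a :: "'a::idom"
  assumes "a \<noteq> c" "a \<noteq> d"
  shows "chords_meet a b c d \<noteq> (0, 0, 0)"
proof
  assume "chords_meet a b c d = (0, 0, 0)"
  then have sum: "c + d - a - b = 0" and prod: "c * d - a * b = 0"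
    unfolding chords_meet_eq by simp_all
  have "(a - c) * (a - d) = (c * d - a * b) - a * (c + d - a - b)"
    by (simp add: algebra_simps)
  also have "\<dots> = 0"
    unfolding sum prod by simp
  finally show False
    using assms by simp
qed

lemma is_meet_conic_pt_chords_meet:
  fixes c0 :: "'a::field hpt"
  assumes "det3 c0 c1 c2 \<noteq> 0"
    and meet: "is_meet A (conic_pt c0 c1 c2 a) (conic_pt c0 c1 c2 b) (conic_pt c0 c1 c2 c) (conic_pt c0 c1 c2 d)"
    and "a \<noteq> b" "c \<noteq> d" "a \<noteq> c" "a \<noteq> d"
  obtains k where "k \<noteq> 0" "A = scale3 k (lincomb3 c0 c1 c2 (chords_meet a b c d))"
proof -
  let ?L = "\<lambda>s t. cof3 c0 c1 c2 (chord_line s t)"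
  have collinear_iff: "proj_collinear A (conic_pt c0 c1 c2 s) (conic_pt c0 c1 c2 t) \<longleftrightarrow> dot3 A (?L s t) = 0"
    if "s \<noteq> t" for s t
    using that unfolding proj_collinear_def det3_eq_dot3_cross3 cross3_conic_pt dot3_scale3 by simp
  have cross: "cross3 (?L a b) (?L c d) = scale3 (det3 c0 c1 c2) (lincomb3 c0 c1 c2 (chords_meet a b c d))"
    unfolding chords_meet_def cross3_cof3 ..
  have A: "A \<noteq> (0, 0, 0)"
    using meet unfolding is_meet_def by simp
  have "dot3 A (?L a b) = 0" "dot3 A (?L c d) = 0"
    using meet assms(3,4) collinear_iff unfolding is_meet_def by auto
  then have "cross3 A (cross3 (?L a b) (?L c d)) = (0, 0, 0)"
    by (rule cross3_cross3_eq_zero_if_orthogonal)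
  moreover have "cross3 (?L a b) (?L c d) \<noteq> (0, 0, 0)"
    unfolding cross scale3_eq_zero_iff lincomb3_eq_zero_iff[OF assms(1)]
    using assms(1) chords_meet_nonzero[OF assms(5,6)] by simp
  ultimately obtain k where "A = scale3 k (cross3 (?L a b) (?L c d))"
    by (rule cross3_eq_zero_imp_parallel)
  with A show thesis
    unfolding cross scale3_scale3 using assms(1)
    by (intro that[of "k * det3 c0 c1 c2"]) (auto simp: scale3_eq_zero_iff)
qed

lemma proj_collinear_conic_chords_meets_iff:
  fixes phi :: "'a::field \<Rightarrow> 'a hpt"
  assumes "conic_param phi"
    and "is_meet A1 (phi a1) (phi b1) (phi c1) (phi d1)" "a1 \<noteq> b1" "c1 \<noteq> d1" "a1 \<noteq> c1" "a1 \<noteq> d1"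
    and "is_meet A2 (phi a2) (phi b2) (phi c2) (phi d2)" "a2 \<noteq> b2" "c2 \<noteq> d2" "a2 \<noteq> c2" "a2 \<noteq> d2"
    and "is_meet A3 (phi a3) (phi b3) (phi c3) (phi d3)" "a3 \<noteq> b3" "c3 \<noteq> d3" "a3 \<noteq> c3" "a3 \<noteq> d3"
  shows "proj_collinear A1 A2 A3 \<longleftrightarrow>
    det3 (chords_meet a1 b1 c1 d1) (chords_meet a2 b2 c2 d2) (chords_meet a3 b3 c3 d3) = 0"
proof -
  obtain m0 m1 m2 where M: "det3 m0 m1 m2 \<noteq> 0" and phi: "phi = conic_pt m0 m1 m2"
    using assms(1) unfolding conic_param_def by blast
  obtain k1 where k1: "k1 \<noteq> 0" "A1 = scale3 k1 (lincomb3 m0 m1 m2 (chords_meet a1 b1 c1 d1))"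
    using is_meet_conic_pt_chords_meet[OF M] assms(2-6) unfolding phi by metis
  obtain k2 where k2: "k2 \<noteq> 0" "A2 = scale3 k2 (lincomb3 m0 m1 m2 (chords_meet a2 b2 c2 d2))"
    using is_meet_conic_pt_chords_meet[OF M] assms(7-11) unfolding phi by metis
  obtain k3 where k3: "k3 \<noteq> 0" "A3 = scale3 k3 (lincomb3 m0 m1 m2 (chords_meet a3 b3 c3 d3))"
    using is_meet_conic_pt_chords_meet[OF M] assms(12-16) unfolding phi by metis
  have "det3 A1 A2 A3 = k1 * k2 * k3 * (det3 m0 m1 m2 *
      det3 (chords_meet a1 b1 c1 d1) (chords_meet a2 b2 c2 d2) (chords_meet a3 b3 c3 d3))"
    unfolding k1 k2 k3 det3_scale3 det3_lincomb3 ..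
  with k1 k2 k3 M show ?thesis
    unfolding proj_collinear_def by simp
qed

lemma det3_chords_meet_consecutive:
  "det3 (chords_meet x1 x2 y1 y2) (chords_meet x2 x3 y2 y3) (chords_meet x3 x4 y3 y4) =
    (x2 - y2) * (x3 - y3) *
    ((y1 - x2) * (y3 - x4) * (y2 - x3) * (y4 - x1) - (x1 - y2) * (x3 - y4) * (x2 - y3) * (x4 - y1))"
  unfolding chords_meet_eq by simp (simp add: algebra_simps)

lemma det3_chords_meet_shared_vertices:
  "det3 (chords_meet x1 x2 y1 y2) (chords_meet u x1 p v) (chords_meet u y1 q v) =
    (x1 - y1) * (u - v) * ((p - u) * (q - x2) * (y1 - v) * (x1 - y2) - (u - q) * (x2 - y1) * (v - x1) * (y2 - p))"
  unfolding chords_meet_eq by simp (simp add: algebra_simps)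

lemma mratio_4: "mratio [a, b, c, d] = (a - b) / (b - c) * ((c - d) / (d - a))"
proof -
  have "length [a, b, c, d] div 2 = Suc (Suc 0)" by simp
  then show ?thesis
    unfolding mratio_def by simp
qed

lemma mratio_8:
  "mratio [a, b, c, d, e, f, g, h] =
    (a - b) / (b - c) * ((c - d) / (d - e)) * ((e - f) / (f - g)) * ((g - h) / (h - a))"
proof -
  have "length [a, b, c, d, e, f, g, h] div 2 = Suc (Suc (Suc (Suc 0)))" by simp
  then show ?thesis
    unfolding mratio_def by (simp add: mult.assoc)
qed

lemma conic_broken_lines_meets_collinear_iff:
  fixes phi :: "'a::field \<Rightarrow> 'a hpt"
  assumes "conic_param phi" and distinct: "distinct [x1, x2, x3, x4, y1, y2, y3, y4]"
    and "is_meet A1 (phi x1) (phi x2) (phi y1) (phi y2)"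
    and "is_meet A2 (phi x2) (phi x3) (phi y2) (phi y3)"
    and "is_meet A3 (phi x3) (phi x4) (phi y3) (phi y4)"
  shows "proj_collinear A1 A2 A3 \<longleftrightarrow> mratio [x1, y2, x3, y4] = mratio [y1, x2, y3, x4]"
proof -
  have "proj_collinear A1 A2 A3 \<longleftrightarrow>
      det3 (chords_meet x1 x2 y1 y2) (chords_meet x2 x3 y2 y3) (chords_meet x3 x4 y3 y4) = 0"
    by (rule proj_collinear_conic_chords_meets_iff[OF assms(1,3) _ _ _ _ assms(4) _ _ _ _ assms(5)])
      (use distinct in auto)
  also have "\<dots> \<longleftrightarrow>
      (x1 - y2) * (x3 - y4) * (x2 - y3) * (x4 - y1) = (y1 - x2) * (y3 - x4) * (y2 - x3) * (y4 - x1)"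
    unfolding det3_chords_meet_consecutive using distinct by auto
  also have "\<dots> \<longleftrightarrow> mratio [x1, y2, x3, y4] = mratio [y1, x2, y3, x4]"
    using distinct by (auto simp: mratio_4 times_divide_times_eq frac_eq_eq ac_simps)
  finally show ?thesis .
qed

lemma conic_two_broken_lines_meets_collinear_iff:
  fixes phi :: "'a::field \<Rightarrow> 'a hpt"
  assumes "conic_param phi" and distinct: "distinct [y2, y1, u, x1, x2, p, v, q]"
    and "is_meet A (phi x1) (phi x2) (phi y1) (phi y2)"
    and "is_meet B (phi u) (phi x1) (phi p) (phi v)"
    and "is_meet C (phi u) (phi y1) (phi q) (phi v)"
  shows "proj_collinear A B C \<longleftrightarrow> mratio [p, u, q, x2, y1, v, x1, y2] = 1"
proof -
  have "proj_collinear A B C \<longleftrightarrow>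
      det3 (chords_meet x1 x2 y1 y2) (chords_meet u x1 p v) (chords_meet u y1 q v) = 0"
    by (rule proj_collinear_conic_chords_meets_iff[OF assms(1,3) _ _ _ _ assms(4) _ _ _ _ assms(5)])
      (use distinct in auto)
  also have "\<dots> \<longleftrightarrow>
      (p - u) * (q - x2) * (y1 - v) * (x1 - y2) = (u - q) * (x2 - y1) * (v - x1) * (y2 - p)"
    unfolding det3_chords_meet_shared_vertices using distinct by auto
  also have "\<dots> \<longleftrightarrow> mratio [p, u, q, x2, y1, v, x1, y2] = 1"
    using distinct by (auto simp: mratio_8 times_divide_times_eq ac_simps)
  finally show ?thesis .
qed

theorem lemma1:
  fixes phi :: "'a::field_char_0 \<Rightarrow> 'a hpt"
  assumes "conic_param phi"
  shows "(\<forall>x1 x2 x3 x4 y1 y2 y3 y4 A1 A2 A3.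
            distinct [x1, x2, x3, x4, y1, y2, y3, y4] \<and>
            is_meet A1 (phi x1) (phi x2) (phi y1) (phi y2) \<and>
            is_meet A2 (phi x2) (phi x3) (phi y2) (phi y3) \<and>
            is_meet A3 (phi x3) (phi x4) (phi y3) (phi y4) \<longrightarrow>
            (proj_collinear A1 A2 A3 \<longleftrightarrow>
             mratio [x1, y2, x3, y4] = mratio [y1, x2, y3, x4]))
       \<and> (\<forall>y2 y1 u x1 x2 p v q A B C.
            distinct [y2, y1, u, x1, x2, p, v, q] \<and>
            is_meet A (phi x1) (phi x2) (phi y1) (phi y2) \<and>
            is_meet B (phi u) (phi x1) (phi p) (phi v) \<and>
            is_meet C (phi u) (phi y1) (phi q) (phi v) \<longrightarrow>
            (proj_collinear A B C \<longleftrightarrow>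
             mratio [p, u, q, x2, y1, v, x1, y2] = 1))"
  by (intro conjI allI impI)
    (simp_all add: conic_broken_lines_meets_collinear_iff[OF assms]
      conic_two_broken_lines_meets_collinear_iff[OF assms])

end
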